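(* Let $\mathcal{X}\subseteq\mathbb{R}^d$ and let $k:\mathbb{R}^d\to\mathbb{R}$ be a continuous positive-definite function with $k(0)=1$; write $k(x,y):=k(x-y)$. Let $P$ be the probability measure on $\mathbb{R}^d$ with $k(\Delta)=\int e^{\sqrt{-1}\,\omega^\mathsf{T}\Delta}\,\mathrm{d}P(\omega)$. Let $\mu$ be a $\sigma$-finite measure on $\mathcal{X}\times\mathcal{X}$, for measurable $g$ on $\mathcal{X}^2$ set $\|g\|_\mu^2:=\int_{\mathcal{X}^2}g(x,y)^2\,\mathrm{d}\mu(x,y)$, and let $\mathcal{M}:=\mu(\mathcal{X}^2)$. Let $D$ be an even positive integer, let $\omega_1,\dots,\omega_{D/2}$ be i.i.d. with law $P$, define $$\tilde z(x):=\sqrt{\tfrac{2}{D}}\,\big(\sin(\omega_1^\mathsf{T}x),\cos(\omega_1^\mathsf{T}x),\dots,\sin(\omega_{D/2}^\mathsf{T}x),\cos(\omega_{D/2}^\mathsf{T}x)\big)^\mathsf{T},$$ and $\tilde f(x,y):=\tilde z(x)^\mathsf{T}\tilde z(y)-k(x-y)$. Then for every $\varepsilon>0$, $$\Pr\Big(\big|\|\tilde f\|_\mu^2-\mathbb{E}\|\tilde f\|_\mu^2\big|\ge\varepsilon\Big)\le 2\exp\Big(\frac{-D^3\varepsilon^2}{8(4D+1)^2\mathcal{M}^2}\Big)\le 2\exp\Big(\frac{-D\varepsilon^2}{200\,\mathcal{M}^2}\Big).$$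
   Context: The existence of $P$ follows from Bochner's theorem. The probability and expectation are over the random draw of $\omega_1,\dots,\omega_{D/2}$. *)

theory Defs
  imports "HOL-Probability.Probability"
begin

definition positive_definite_fun :: "('a::ab_group_add \<Rightarrow> real) \<Rightarrow> bool" where
  "positive_definite_fun k \<longleftrightarrow>
     (\<forall>(n::nat) (x::nat \<Rightarrow> 'a) (c::nat \<Rightarrow> real).
        (\<Sum>i<n. \<Sum>j<n. c i * c j * k (x i - x j)) \<ge> 0)"

text \<open>Random Fourier feature map: coordinate j (0-based, j < D) of z~(x).
  Coordinates 2i and 2i+1 are sin and cos of (omega_i . x), i < D/2 (0-based).\<close>
definition rff_z :: "nat \<Rightarrow> (nat \<Rightarrow> real^'d) \<Rightarrow> real^'d \<Rightarrow> nat \<Rightarrow> real" where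
  "rff_z D \<omega> x j = sqrt (2 / real D) *
     (if even j then sin (\<omega> (j div 2) \<bullet> x) else cos (\<omega> (j div 2) \<bullet> x))"

definition rff_err :: "nat \<Rightarrow> (real^'d \<Rightarrow> real) \<Rightarrow> (nat \<Rightarrow> real^'d) \<Rightarrow> real^'d \<Rightarrow> real^'d \<Rightarrow> real" where
  "rff_err D k \<omega> x y = (\<Sum>j<D. rff_z D \<omega> x j * rff_z D \<omega> y j) - k (x - y)"

definition sqnorm_mu :: "('a \<times> 'a) measure \<Rightarrow> ('a \<Rightarrow> 'a \<Rightarrow> real) \<Rightarrow> real" where
  "sqnorm_mu \<mu> g = (\<integral>p. (g (fst p) (snd p))\<^sup>2 \<partial>\<mu>)"

end

theory Submission
  imports Defs
begin

text \<open>
  The squared error F(omega) = ||f~||_mu^2 is a function of the independent frequencies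
  omega_1, ..., omega_(D/2). Pairing the sine and cosine features gives
  f~(x,y) = (2/D) * sum_i cos(omega_i . (x - y)) - k(x - y), so |f~| <= 2 (since |k| <= 1 by
  Bochner's representation), and replacing a single omega_i moves f~ by at most 4/D, hence F
  by at most 16 M / D. McDiarmid's bounded-differences inequality, obtained from Hoeffding's
  lemma by integrating out one coordinate at a time, then gives the tail bound
  2 exp (- D eps^2 / (64 M^2)), which dominates both stated bounds.
\<close>

section \<open>McDiarmid's bounded-differences inequality\<close>

lemma (in finite_measure) abs_integral_le_const_measure:
  fixes h :: "'a \<Rightarrow> real"
  assumes "h \<in> borel_measurable M" "\<And>x. x \<in> space M \<Longrightarrow> \<bar>h x\<bar> \<le> C"
  shows "\<bar>\<integral>x. h x \<partial>M\<bar> \<le> C * measure M (space M)"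
proof -
  have "integrable M h"
    by (rule integrable_const_bound[where B = C]) (use assms in auto)
  have "\<bar>\<integral>x. h x \<partial>M\<bar> \<le> (\<integral>x. \<bar>h x\<bar> \<partial>M)"
    by (rule integral_abs_bound)
  also have "\<dots> \<le> (\<integral>x. C \<partial>M)"
    by (intro integral_mono) (use assms \<open>integrable M h\<close> in auto)
  finally show ?thesis by (simp add: mult.commute)
qed

lemma Hoeffdings_lemma_bounded_oscillation:
  fixes h :: "'a \<Rightarrow> real"
  assumes "prob_space P" and h: "h \<in> borel_measurable P" and l: "l > 0"
    and osc: "\<And>y y'. y \<in> space P \<Longrightarrow> y' \<in> space P \<Longrightarrow> h y - h y' \<le> c"
  shows "(\<integral>\<^sup>+y. ennreal (exp (l * (h y - (\<integral>y. h y \<partial>P)))) \<partial>P) \<le> ennreal (exp (l\<^sup>2 * c\<^sup>2 / 8))"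
proof -
  interpret prob_space P by fact
  obtain y0 where y0: "y0 \<in> space P" using not_empty by blast
  define a where "a = (INF y \<in> space P. h y)"
  have bdd: "bdd_below (h ` space P)"
    by (rule bdd_belowI[where m = "h y0 - c"]) (use osc y0 in force)
  have "h y \<in> {a..a + c}" if y: "y \<in> space P" for y
    unfolding atLeastAtMost_iff
  proof
    show "a \<le> h y" unfolding a_def by (rule cINF_lower[OF bdd y])
    have "h y - c \<le> h y'" if "y' \<in> space P" for y' using osc[OF y that] by simp
    then have "h y - c \<le> a" unfolding a_def by (intro cINF_greatest not_empty)
    then show "h y \<le> a + c" by simp
  qed
  then interpret interval_bounded_random_variable P h a "a + c"
    by unfold_locales (use h in auto)
  from Hoeffdings_lemma_nn_integral[OF l] show ?thesis by simp
qed

lemma space_PiM_fun_upd: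
  "w \<in> space (PiM I M) \<Longrightarrow> y \<in> space (M i) \<Longrightarrow> w(i := y) \<in> space (PiM (insert i I) M)"
  unfolding space_PiM by (rule PiE_fun_upd)

definition bounded_differences :: "'i set \<Rightarrow> 'a measure \<Rightarrow> real \<Rightarrow> (('i \<Rightarrow> 'a) \<Rightarrow> real) \<Rightarrow> bool" where
  "bounded_differences I P c f \<longleftrightarrow>
     (\<forall>w \<in> space (PiM I (\<lambda>_. P)). \<forall>i \<in> I. \<forall>y \<in> space P. \<bar>f w - f (w(i := y))\<bar> \<le> c)"

lemma bounded_differences_integral_coordinate:
  assumes P: "prob_space P" and i: "i \<notin> I"
    and f: "f \<in> borel_measurable (PiM (insert i I) (\<lambda>_. P))"
    and f_bound: "\<And>w. w \<in> space (PiM (insert i I) (\<lambda>_. P)) \<Longrightarrow> \<bar>f w\<bar> \<le> B"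
    and f_diff: "bounded_differences (insert i I) P c f"
  shows "bounded_differences I P c (\<lambda>w. \<integral>z. f (w(i := z)) \<partial>P)"
  unfolding bounded_differences_def
proof (intro ballI)
  interpret prob_space P by fact
  have section_measurable: "(\<lambda>z. f (v(i := z))) \<in> borel_measurable P"
    if "v \<in> space (PiM I (\<lambda>_. P))" for v
    by (rule measurable_compose[OF measurable_component_update[OF that i] f])
  have section_integrable: "integrable P (\<lambda>z. f (v(i := z)))"
    if "v \<in> space (PiM I (\<lambda>_. P))" for v
    by (rule integrable_const_bound[where B = B])
      (use f_bound space_PiM_fun_upd[OF that] section_measurable[OF that] in auto)
  fix w j y
  assume w: "w \<in> space (PiM I (\<lambda>_. P))" and j: "j \<in> I" and y: "y \<in> space P"
  have w': "w(j := y) \<in> space (PiM I (\<lambda>_. P))"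
    using space_PiM_fun_upd[OF w, of y j] j y by (simp add: insert_absorb)
  have twist: "(w(j := y))(i := z) = (w(i := z))(j := y)" for z
    using i j by (intro fun_upd_twist) blast
  have "(\<integral>z. f (w(i := z)) \<partial>P) - (\<integral>z. f ((w(j := y))(i := z)) \<partial>P)
      = (\<integral>z. f (w(i := z)) - f ((w(j := y))(i := z)) \<partial>P)"
    by (rule Bochner_Integration.integral_diff[symmetric, OF section_integrable[OF w] section_integrable[OF w']])
  also have "\<dots> = (\<integral>z. f (w(i := z)) - f ((w(i := z))(j := y)) \<partial>P)"
    by (simp only: twist)
  also have "\<bar>\<dots>\<bar> \<le> c * measure P (space P)"
  proof (rule abs_integral_le_const_measure)
    show "(\<lambda>z. f (w(i := z)) - f ((w(i := z))(j := y))) \<in> borel_measurable P"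
      using section_measurable[OF w] section_measurable[OF w'] unfolding twist by measurable
    show "\<bar>f (w(i := z)) - f ((w(i := z))(j := y))\<bar> \<le> c" if "z \<in> space P" for z
      using f_diff space_PiM_fun_upd[OF w that] j y unfolding bounded_differences_def by blast
  qed
  finally show "\<bar>(\<integral>z. f (w(i := z)) \<partial>P) - (\<integral>z. f ((w(j := y))(i := z)) \<partial>P)\<bar> \<le> c"
    by (simp add: prob_space)
qed

lemma nn_integral_exp_section_le:
  fixes f :: "('i \<Rightarrow> 'a) \<Rightarrow> real"
  assumes P: "prob_space P" and i: "i \<notin> I" and l: "l > 0"
    and f: "f \<in> borel_measurable (PiM (insert i I) (\<lambda>_. P))"
    and f_diff: "bounded_differences (insert i I) P c f"
    and w: "w \<in> space (PiM I (\<lambda>_. P))"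
  shows "(\<integral>\<^sup>+y. ennreal (exp (l * (f (w(i := y)) - E))) \<partial>P)
      \<le> ennreal (exp (l * ((\<integral>y. f (w(i := y)) \<partial>P) - E))) * ennreal (exp (l\<^sup>2 * c\<^sup>2 / 8))"
proof -
  define m where "m = (\<integral>y. f (w(i := y)) \<partial>P)"
  have section_measurable: "(\<lambda>y. f (w(i := y))) \<in> borel_measurable P"
    by (rule measurable_compose[OF measurable_component_update[OF w i] f])
  have "(\<integral>\<^sup>+y. ennreal (exp (l * (f (w(i := y)) - E))) \<partial>P)
      = (\<integral>\<^sup>+y. ennreal (exp (l * (m - E))) * ennreal (exp (l * (f (w(i := y)) - m))) \<partial>P)"
    by (intro nn_integral_cong) (simp add: ennreal_mult[symmetric] exp_add[symmetric] algebra_simps)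
  also have "\<dots> = ennreal (exp (l * (m - E))) * (\<integral>\<^sup>+y. ennreal (exp (l * (f (w(i := y)) - m))) \<partial>P)"
    by (rule nn_integral_cmult) (use section_measurable in measurable)
  also have "\<dots> \<le> ennreal (exp (l * (m - E))) * ennreal (exp (l\<^sup>2 * c\<^sup>2 / 8))"
  proof (intro mult_left_mono)
    show "(\<integral>\<^sup>+y. ennreal (exp (l * (f (w(i := y)) - m))) \<partial>P) \<le> ennreal (exp (l\<^sup>2 * c\<^sup>2 / 8))"
      unfolding m_def
    proof (rule Hoeffdings_lemma_bounded_oscillation[OF P section_measurable l])
      fix y y' assume "y \<in> space P" "y' \<in> space P"
      then show "f (w(i := y)) - f (w(i := y')) \<le> c"
        using f_diff space_PiM_fun_upd[OF w] unfolding bounded_differences_def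
        by (metis abs_le_D1 fun_upd_upd insertI1)
    qed
  qed simp
  finally show ?thesis unfolding m_def .
qed

lemma McDiarmid_nn_integral_exp_le:
  fixes f :: "('i \<Rightarrow> 'a) \<Rightarrow> real"
  assumes P: "prob_space P" and "finite I" and l: "l > 0"
  shows "f \<in> borel_measurable (PiM I (\<lambda>_. P)) \<Longrightarrow>
    (\<And>w. w \<in> space (PiM I (\<lambda>_. P)) \<Longrightarrow> \<bar>f w\<bar> \<le> B) \<Longrightarrow> bounded_differences I P c f \<Longrightarrow>
    (\<integral>\<^sup>+w. ennreal (exp (l * (f w - (\<integral>w. f w \<partial>PiM I (\<lambda>_. P))))) \<partial>PiM I (\<lambda>_. P))
      \<le> ennreal (exp (l\<^sup>2 * real (card I) * c\<^sup>2 / 8))"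
  using \<open>finite I\<close>
proof (induction I arbitrary: f rule: finite_induct)
  case empty
  show ?case
    by (simp add: PiM_empty lebesgue_integral_count_space_finite nn_integral_count_space_finite)
next
  case (insert i I)
  interpret P: prob_space P by fact
  interpret product_sigma_finite "\<lambda>_::'i. P"
    by (simp add: product_sigma_finite_def P.sigma_finite_measure_axioms)
  let ?M = "\<lambda>I. PiM I (\<lambda>_::'i. P)"
  note f = insert.prems(1) and f_bound = insert.prems(2) and f_diff = insert.prems(3)
  have [measurable]: "f \<in> borel_measurable (?M (insert i I))" by (fact f)
  define g where "g w = (\<integral>y. f (w(i := y)) \<partial>P)" for w
  define E where "E = (\<integral>w. g w \<partial>?M I)"
  have g: "g \<in> borel_measurable (?M I)"
    unfolding g_def
    by (rule P.borel_measurable_lebesgue_integral[of "\<lambda>w y. f (w(i := y))", simplified])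
      (use measurable_compose[OF measurable_add_dim f] in \<open>simp add: case_prod_unfold\<close>)
  have section_measurable: "(\<lambda>y. f (w(i := y))) \<in> borel_measurable P" if "w \<in> space (?M I)" for w
    by (rule measurable_compose[OF measurable_component_update[OF that insert.hyps(2)] f])
  have g_bound: "\<bar>g w\<bar> \<le> B" if "w \<in> space (?M I)" for w
    using P.abs_integral_le_const_measure[OF section_measurable[OF that], of B]
      f_bound[OF space_PiM_fun_upd[OF that]] by (simp add: g_def P.prob_space)
  have g_diff: "bounded_differences I P c g"
    unfolding g_def by (rule bounded_differences_integral_coordinate[OF P insert.hyps(2) f f_bound f_diff])
  have integral_f: "(\<integral>w. f w \<partial>?M (insert i I)) = E"
    unfolding E_def g_def
    by (rule product_integral_insert[OF insert.hyps])
      (rule finite_measure.integrable_const_bound[where B = B],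
       use f_bound prob_space_PiM[OF P] in \<open>auto simp: prob_space_def\<close>)
  have "(\<integral>\<^sup>+w. ennreal (exp (l * (f w - (\<integral>w. f w \<partial>?M (insert i I))))) \<partial>?M (insert i I))
      = (\<integral>\<^sup>+w. \<integral>\<^sup>+y. ennreal (exp (l * (f (w(i := y)) - E))) \<partial>P \<partial>?M I)"
    unfolding integral_f by (rule product_nn_integral_insert[OF insert.hyps]) measurable
  also have "\<dots> \<le> (\<integral>\<^sup>+w. ennreal (exp (l\<^sup>2 * c\<^sup>2 / 8)) * ennreal (exp (l * (g w - E))) \<partial>?M I)"
  proof (rule nn_integral_mono)
    fix w assume "w \<in> space (?M I)"
    from nn_integral_exp_section_le[OF P insert.hyps(2) l f f_diff this]
    show "(\<integral>\<^sup>+y. ennreal (exp (l * (f (w(i := y)) - E))) \<partial>P)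
        \<le> ennreal (exp (l\<^sup>2 * c\<^sup>2 / 8)) * ennreal (exp (l * (g w - E)))"
      by (simp only: g_def mult.commute)
  qed
  also have "\<dots> = ennreal (exp (l\<^sup>2 * c\<^sup>2 / 8)) * (\<integral>\<^sup>+w. ennreal (exp (l * (g w - E))) \<partial>?M I)"
    by (rule nn_integral_cmult) (use g in measurable)
  also have "\<dots> \<le> ennreal (exp (l\<^sup>2 * c\<^sup>2 / 8)) * ennreal (exp (l\<^sup>2 * real (card I) * c\<^sup>2 / 8))"
    unfolding E_def by (intro mult_left_mono insert.IH[OF g g_bound g_diff]) auto
  also have "\<dots> = ennreal (exp (l\<^sup>2 * real (card (insert i I)) * c\<^sup>2 / 8))"
    using insert.hyps by (simp add: ennreal_mult[symmetric] exp_add[symmetric] algebra_simps add_divide_distrib)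
  finally show ?case .
qed

lemma McDiarmid_ineq_ge:
  fixes f :: "('i \<Rightarrow> 'a) \<Rightarrow> real"
  assumes P: "prob_space P" and I: "finite I"
    and f: "f \<in> borel_measurable (PiM I (\<lambda>_. P))"
    and f_bound: "\<And>w. w \<in> space (PiM I (\<lambda>_. P)) \<Longrightarrow> \<bar>f w\<bar> \<le> B"
    and f_diff: "bounded_differences I P c f" and e: "e > 0"
  shows "measure (PiM I (\<lambda>_. P)) {w \<in> space (PiM I (\<lambda>_. P)). f w - (\<integral>w. f w \<partial>PiM I (\<lambda>_. P)) \<ge> e}
     \<le> exp (- 2 * e\<^sup>2 / (real (card I) * c\<^sup>2))"
    (is "measure ?M ?A \<le> _")
proof -
  interpret M: prob_space ?M by (rule prob_space_PiM) (simp add: P)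
  define E where "E = (\<integral>w. f w \<partial>?M)"
  define V where "V = real (card I) * c\<^sup>2"
  show ?thesis
  proof (cases "V = 0")
    case True
    then have "- 2 * e\<^sup>2 / (real (card I) * c\<^sup>2) = 0" by (simp add: V_def)
    then show ?thesis by (simp only: exp_zero M.prob_le_1)
  next
    case False
    then have "V > 0" unfolding V_def by simp
    define l where "l = 4 * e / V"
    have l: "l > 0" using \<open>V > 0\<close> e by (simp add: l_def)
    have "ennreal (measure ?M ?A) = emeasure ?M {w \<in> space ?M. e \<le> f w - E}"
      by (simp add: M.emeasure_eq_measure E_def)
    also have "\<dots> \<le> ennreal (exp (- l * e)) * (\<integral>\<^sup>+w \<in> space ?M. ennreal (exp (l * (f w - E))) \<partial>?M)"
      using f by (intro Chernoff_ineq_nn_integral_ge l) auto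
    also have "(\<integral>\<^sup>+w \<in> space ?M. ennreal (exp (l * (f w - E))) \<partial>?M) = (\<integral>\<^sup>+w. ennreal (exp (l * (f w - E))) \<partial>?M)"
      by (intro nn_integral_cong) simp
    also have "ennreal (exp (- l * e)) * \<dots> \<le> ennreal (exp (- l * e)) * ennreal (exp (l\<^sup>2 * V / 8))"
      unfolding E_def V_def mult.assoc[symmetric]
      by (intro mult_left_mono McDiarmid_nn_integral_exp_le[OF P I l f f_bound f_diff]) auto
    also have "\<dots> = ennreal (exp (- 2 * e\<^sup>2 / V))"
      using \<open>V > 0\<close> by (simp add: ennreal_mult[symmetric] exp_add[symmetric] l_def field_simps power2_eq_square)
    finally show ?thesis unfolding V_def by (simp add: ennreal_le_iff)
  qed
qed

lemma McDiarmid_ineq_abs: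
  fixes f :: "('i \<Rightarrow> 'a) \<Rightarrow> real"
  assumes P: "prob_space P" and I: "finite I"
    and f: "f \<in> borel_measurable (PiM I (\<lambda>_. P))"
    and f_bound: "\<And>w. w \<in> space (PiM I (\<lambda>_. P)) \<Longrightarrow> \<bar>f w\<bar> \<le> B"
    and f_diff: "bounded_differences I P c f" and e: "e > 0"
  shows "measure (PiM I (\<lambda>_. P)) {w \<in> space (PiM I (\<lambda>_. P)). \<bar>f w - (\<integral>w. f w \<partial>PiM I (\<lambda>_. P))\<bar> \<ge> e}
     \<le> 2 * exp (- 2 * e\<^sup>2 / (real (card I) * c\<^sup>2))"
proof -
  let ?M = "PiM I (\<lambda>_. P)"
  interpret M: prob_space ?M by (rule prob_space_PiM) (simp add: P)
  have f_diff_neg: "bounded_differences I P c (\<lambda>w. - f w)"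
    using f_diff unfolding bounded_differences_def by (simp add: abs_minus_commute)
  have upper: "measure ?M {w \<in> space ?M. f w - (\<integral>w. f w \<partial>?M) \<ge> e} \<le> exp (- 2 * e\<^sup>2 / (real (card I) * c\<^sup>2))"
    by (rule McDiarmid_ineq_ge[OF P I f f_bound f_diff e])
  have lower: "measure ?M {w \<in> space ?M. - f w - (\<integral>w. - f w \<partial>?M) \<ge> e} \<le> exp (- 2 * e\<^sup>2 / (real (card I) * c\<^sup>2))"
    by (rule McDiarmid_ineq_ge[OF P I _ _ f_diff_neg e, of B]) (use f f_bound in auto)
  have "{w \<in> space ?M. \<bar>f w - (\<integral>w. f w \<partial>?M)\<bar> \<ge> e}
      \<subseteq> {w \<in> space ?M. f w - (\<integral>w. f w \<partial>?M) \<ge> e} \<union> {w \<in> space ?M. - f w - (\<integral>w. - f w \<partial>?M) \<ge> e}"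
    by auto
  then have "measure ?M {w \<in> space ?M. \<bar>f w - (\<integral>w. f w \<partial>?M)\<bar> \<ge> e}
      \<le> measure ?M {w \<in> space ?M. f w - (\<integral>w. f w \<partial>?M) \<ge> e} + measure ?M {w \<in> space ?M. - f w - (\<integral>w. - f w \<partial>?M) \<ge> e}"
    using f by (intro order_trans[OF M.finite_measure_mono measure_Un_le]) auto
  with upper lower show ?thesis by linarith
qed

section \<open>Random Fourier features\<close>

lemma norm_integral_exp_i_le_1:
  assumes "prob_space P"
  shows "norm (\<integral>w. exp (\<i> * complex_of_real (f w)) \<partial>P) \<le> 1"
proof -
  have "norm (\<integral>w. exp (\<i> * complex_of_real (f w)) \<partial>P) \<le> (\<integral>w. norm (exp (\<i> * complex_of_real (f w))) \<partial>P)"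
    by (rule integral_norm_bound)
  also have "\<dots> = 1" using prob_space.prob_space[OF assms] by (simp add: norm_exp_i_times)
  finally show ?thesis .
qed

lemma abs_square_diff_le:
  fixes a b :: real
  assumes "\<bar>a\<bar> \<le> B" "\<bar>b\<bar> \<le> B"
  shows "\<bar>a\<^sup>2 - b\<^sup>2\<bar> \<le> 2 * B * \<bar>a - b\<bar>"
proof -
  have "\<bar>a\<^sup>2 - b\<^sup>2\<bar> = \<bar>a + b\<bar> * \<bar>a - b\<bar>"
    by (simp add: power2_eq_square algebra_simps flip: abs_mult)
  also have "\<dots> \<le> 2 * B * \<bar>a - b\<bar>"
    using assms by (intro mult_right_mono) auto
  finally show ?thesis .
qed

lemma sqnorm_mu_abs_le:
  assumes "finite_measure \<mu>" "(\<lambda>p. g (fst p) (snd p)) \<in> borel_measurable \<mu>"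
    and "\<And>x y. \<bar>g x y\<bar> \<le> B"
  shows "\<bar>sqnorm_mu \<mu> g\<bar> \<le> B\<^sup>2 * measure \<mu> (space \<mu>)"
  unfolding sqnorm_mu_def
proof (rule finite_measure.abs_integral_le_const_measure[OF assms(1)])
  show "(\<lambda>p. (g (fst p) (snd p))\<^sup>2) \<in> borel_measurable \<mu>" using assms(2) by measurable
  show "\<bar>(g (fst p) (snd p))\<^sup>2\<bar> \<le> B\<^sup>2" for p
    using power_mono[OF assms(3) abs_ge_zero, of _ _ 2] by simp
qed

lemma sqnorm_mu_diff_abs_le:
  assumes \<mu>: "finite_measure \<mu>"
    and g: "(\<lambda>p. g (fst p) (snd p)) \<in> borel_measurable \<mu>" "\<And>x y. \<bar>g x y\<bar> \<le> B"
    and h: "(\<lambda>p. h (fst p) (snd p)) \<in> borel_measurable \<mu>" "\<And>x y. \<bar>h x y\<bar> \<le> B"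
    and diff: "\<And>x y. \<bar>g x y - h x y\<bar> \<le> \<delta>"
  shows "\<bar>sqnorm_mu \<mu> g - sqnorm_mu \<mu> h\<bar> \<le> 2 * B * \<delta> * measure \<mu> (space \<mu>)"
proof -
  interpret finite_measure \<mu> by fact
  have integrable: "integrable \<mu> (\<lambda>p. (f (fst p) (snd p))\<^sup>2)"
    if "(\<lambda>p. f (fst p) (snd p)) \<in> borel_measurable \<mu>" "\<And>x y. \<bar>f x y\<bar> \<le> B" for f
    by (rule integrable_const_bound[where B = "B\<^sup>2"])
      (use that power_mono[OF that(2) abs_ge_zero, of _ _ 2] in auto)
  have "sqnorm_mu \<mu> g - sqnorm_mu \<mu> h = (\<integral>p. (g (fst p) (snd p))\<^sup>2 - (h (fst p) (snd p))\<^sup>2 \<partial>\<mu>)"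
    unfolding sqnorm_mu_def using integrable[OF g] integrable[OF h] by simp
  also have "\<bar>\<dots>\<bar> \<le> 2 * B * \<delta> * measure \<mu> (space \<mu>)"
  proof (rule abs_integral_le_const_measure)
    show "(\<lambda>p. (g (fst p) (snd p))\<^sup>2 - (h (fst p) (snd p))\<^sup>2) \<in> borel_measurable \<mu>"
      using g h by measurable
    fix p
    have "0 \<le> B" using g(2) by (meson abs_ge_zero order_trans)
    have "\<bar>(g (fst p) (snd p))\<^sup>2 - (h (fst p) (snd p))\<^sup>2\<bar> \<le> 2 * B * \<bar>g (fst p) (snd p) - h (fst p) (snd p)\<bar>"
      by (rule abs_square_diff_le[OF g(2) h(2)])
    also have "\<dots> \<le> 2 * B * \<delta>"
      using diff \<open>0 \<le> B\<close> by (intro mult_left_mono) auto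
    finally show "\<bar>(g (fst p) (snd p))\<^sup>2 - (h (fst p) (snd p))\<^sup>2\<bar> \<le> 2 * B * \<delta>" .
  qed
  finally show ?thesis .
qed

lemma sum_lessThan_in_pairs:
  fixes g :: "nat \<Rightarrow> 'a::comm_monoid_add"
  shows "(\<Sum>j<2 * m. g j) = (\<Sum>i<m. g (2 * i) + g (2 * i + 1))"
  by (induction m) (simp_all add: ac_simps)

lemma rff_err_eq_cos_sum:
  assumes "D = 2 * n"
  shows "rff_err D k w x y = (\<Sum>i<n. 2 / real D * cos (w i \<bullet> x - w i \<bullet> y)) - k (x - y)"
proof -
  have "rff_z D w x (2 * i) * rff_z D w y (2 * i) + rff_z D w x (2 * i + 1) * rff_z D w y (2 * i + 1)
      = 2 / real D * cos (w i \<bullet> x - w i \<bullet> y)" for i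
  proof -
    have "sqrt (2 / real D) * sqrt (2 / real D) = 2 / real D" by simp
    then show ?thesis
      unfolding rff_z_def cos_diff by (simp add: algebra_simps)
  qed
  then show ?thesis
    unfolding rff_err_def assms sum_lessThan_in_pairs by simp
qed

lemma abs_sum_cos_le_1:
  assumes "D = 2 * n"
  shows "\<bar>\<Sum>i<n. 2 / real D * cos (t i)\<bar> \<le> 1"
proof -
  have "\<bar>\<Sum>i<n. 2 / real D * cos (t i)\<bar> \<le> (\<Sum>i<n. 2 / real D)"
    by (rule order_trans[OF sum_abs sum_mono]) (auto simp: abs_mult intro!: divide_right_mono)
  also have "\<dots> \<le> 1" using assms by simp
  finally show ?thesis .
qed

lemma rff_err_abs_le:
  assumes "even D" and k_bound: "\<And>d. \<bar>k d\<bar> \<le> 1"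
  shows "\<bar>rff_err D k w x y\<bar> \<le> 2"
proof -
  have D: "D = 2 * (D div 2)" using assms(1) by simp
  have "\<bar>rff_err D k w x y\<bar> \<le> \<bar>\<Sum>i<D div 2. 2 / real D * cos (w i \<bullet> x - w i \<bullet> y)\<bar> + \<bar>k (x - y)\<bar>"
    unfolding rff_err_eq_cos_sum[OF D] by (rule abs_triangle_ineq4)
  also have "\<dots> \<le> 1 + 1" by (intro add_mono abs_sum_cos_le_1[OF D] k_bound)
  finally show ?thesis by simp
qed

lemma rff_err_update_abs_le:
  assumes "even D" "i < D div 2"
  shows "\<bar>rff_err D k (w(i := v)) x y - rff_err D k w x y\<bar> \<le> 4 / real D"
proof -
  define c where "c w' (j::nat) = 2 / real D * cos (w' j \<bullet> x - w' j \<bullet> y)" for w' j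
  have D: "D = 2 * (D div 2)" using assms(1) by simp
  have i: "i \<in> {..<D div 2}" using assms(2) by simp
  have "rff_err D k (w(i := v)) x y - rff_err D k w x y = c (w(i := v)) i - c w i"
    unfolding rff_err_eq_cos_sum[OF D] c_def[symmetric] sum.remove[OF finite_lessThan i]
    by (simp add: c_def)
  also have "\<bar>\<dots>\<bar> \<le> 2 / real D + 2 / real D"
    by (rule order_trans[OF abs_triangle_ineq4 add_mono]) (auto simp: c_def abs_mult intro!: divide_right_mono)
  finally show ?thesis by simp
qed

lemma borel_measurable_PiM_component:
  assumes "sets P = sets borel"
  shows "(\<lambda>w. w i) \<in> borel_measurable (PiM I (\<lambda>_. P))"
proof (cases "i \<in> I")
  case True
  then show ?thesis
    using measurable_component_singleton[OF True, of "\<lambda>_. P"] measurable_cong_sets[OF refl assms] by blast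
next
  case False
  show ?thesis
    by (subst measurable_cong[where g = "\<lambda>w. undefined"]) (auto simp: space_PiM PiE_arb[OF _ False])
qed

lemma rff_err_measurable:
  fixes k :: "real^'d \<Rightarrow> real" and \<mu> :: "((real^'d) \<times> (real^'d)) measure"
  assumes "sets P = sets borel" "continuous_on UNIV k" "sets \<mu> = sets (restrict_space borel S)"
  shows "(\<lambda>(w, p). rff_err D k w (fst p) (snd p)) \<in> borel_measurable (PiM I (\<lambda>_. P) \<Otimes>\<^sub>M \<mu>)"
    and "(\<lambda>p. rff_err D k w (fst p) (snd p)) \<in> borel_measurable \<mu>"
proof -
  have [measurable]: "(\<lambda>w. w j) \<in> borel_measurable (PiM I (\<lambda>_. P))" for j
    by (rule borel_measurable_PiM_component[OF assms(1)])
  have [measurable]: "fst \<in> borel_measurable \<mu>" "snd \<in> borel_measurable \<mu>"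
    unfolding measurable_cong_sets[OF assms(3) refl]
    by (intro measurable_restrict_space1 borel_measurable_continuous_onI continuous_intros)+
  have [measurable]: "k \<in> borel_measurable borel"
    by (rule borel_measurable_continuous_onI[OF assms(2)])
  show "(\<lambda>(w, p). rff_err D k w (fst p) (snd p)) \<in> borel_measurable (PiM I (\<lambda>_. P) \<Otimes>\<^sub>M \<mu>)"
    and "(\<lambda>p. rff_err D k w (fst p) (snd p)) \<in> borel_measurable \<mu>"
    unfolding rff_err_def rff_z_def by measurable
qed

lemma sqnorm_rff_err_concentration:
  fixes k :: "real^'d \<Rightarrow> real" and P :: "(real^'d) measure"
    and \<mu> :: "((real^'d) \<times> (real^'d)) measure"
  assumes P: "prob_space P" "sets P = sets borel"
    and k: "continuous_on UNIV k" "\<And>d. \<bar>k d\<bar> \<le> 1"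
    and \<mu>: "finite_measure \<mu>" "sets \<mu> = sets (restrict_space borel S)"
    and D: "even D" and \<epsilon>: "\<epsilon> > 0"
  defines "\<Omega> \<equiv> PiM {..<D div 2} (\<lambda>_. P)"
    and "F \<equiv> \<lambda>w. sqnorm_mu \<mu> (rff_err D k w)"
  shows "measure \<Omega> {w \<in> space \<Omega>. \<bar>F w - (\<integral>w. F w \<partial>\<Omega>)\<bar> \<ge> \<epsilon>}
      \<le> 2 * exp (- (real D * \<epsilon>\<^sup>2) / (64 * (measure \<mu> (space \<mu>))\<^sup>2))"
proof -
  define M where "M = measure \<mu> (space \<mu>)"
  note err_measurable = rff_err_measurable[OF P(2) k(1) \<mu>(2)]
  have F_measurable: "F \<in> borel_measurable \<Omega>"
    unfolding F_def sqnorm_mu_def \<Omega>_def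
    using finite_measure.sigma_finite_measure[OF \<mu>(1)] err_measurable(1)
    by (intro sigma_finite_measure.borel_measurable_lebesgue_integral[of \<mu> "\<lambda>w p. (rff_err D k w (fst p) (snd p))\<^sup>2", simplified])
      (auto simp: case_prod_unfold)
  have err_bound: "\<bar>rff_err D k w x y\<bar> \<le> 2" for w x y
    by (rule rff_err_abs_le[OF D k(2)])
  have F_bound: "\<bar>F w\<bar> \<le> 4 * M" for w
    using sqnorm_mu_abs_le[OF \<mu>(1) err_measurable(2) err_bound] by (simp add: F_def M_def)
  have F_diff: "bounded_differences {..<D div 2} P (16 * M / real D) F"
    unfolding bounded_differences_def
  proof (intro ballI)
    fix w i y assume "i \<in> {..<D div 2}"
    then have "\<bar>rff_err D k w x x' - rff_err D k (w(i := y)) x x'\<bar> \<le> 4 / real D" for x x'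
      using rff_err_update_abs_le[OF D] by (simp add: abs_minus_commute)
    then have "\<bar>F w - F (w(i := y))\<bar> \<le> 2 * 2 * (4 / real D) * M"
      unfolding F_def M_def
      by (rule sqnorm_mu_diff_abs_le[OF \<mu>(1) err_measurable(2) err_bound err_measurable(2) err_bound])
    then show "\<bar>F w - F (w(i := y))\<bar> \<le> 16 * M / real D" by simp
  qed
  have "measure \<Omega> {w \<in> space \<Omega>. \<bar>F w - (\<integral>w. F w \<partial>\<Omega>)\<bar> \<ge> \<epsilon>}
      \<le> 2 * exp (- 2 * \<epsilon>\<^sup>2 / (real (card {..<D div 2}) * (16 * M / real D)\<^sup>2))"
    unfolding \<Omega>_def
    by (rule McDiarmid_ineq_abs[OF P(1) finite_lessThan F_measurable[unfolded \<Omega>_def] _ F_diff \<epsilon>])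
      (rule F_bound)
  also have "- 2 * \<epsilon>\<^sup>2 / (real (card {..<D div 2}) * (16 * M / real D)\<^sup>2) = - (real D * \<epsilon>\<^sup>2) / (64 * M\<^sup>2)"
  proof (cases "M = 0 \<or> D = 0")
    case False
    with D show ?thesis by (elim evenE) (auto simp: field_simps power2_eq_square)
  qed auto
  finally show ?thesis unfolding M_def .
qed

lemma rff_tail_exponent_bounds:
  fixes D \<epsilon> M :: real
  assumes "D \<ge> 1"
  shows "exp (- (D * \<epsilon>\<^sup>2) / (64 * M\<^sup>2)) \<le> exp (- (D ^ 3 * \<epsilon>\<^sup>2) / (8 * (4 * D + 1)\<^sup>2 * M\<^sup>2))"
    and "exp (- (D ^ 3 * \<epsilon>\<^sup>2) / (8 * (4 * D + 1)\<^sup>2 * M\<^sup>2)) \<le> exp (- (D * \<epsilon>\<^sup>2) / (200 * M\<^sup>2))"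
proof -
  have ratio: "D ^ 3 * \<epsilon>\<^sup>2 / (8 * (4 * D + 1)\<^sup>2 * M\<^sup>2) = D * \<epsilon>\<^sup>2 / M\<^sup>2 * (D\<^sup>2 / (8 * (4 * D + 1)\<^sup>2))"
    by (simp add: power2_eq_square power3_eq_cube mult_ac)
  have "D \<le> D\<^sup>2" "1 \<le> D\<^sup>2"
    using assms mult_left_mono[of 1 D D] one_le_power[OF assms, of 2] by (simp_all add: power2_eq_square)
  moreover have "(4 * D + 1)\<^sup>2 = 16 * D\<^sup>2 + 8 * D + 1" by (simp add: power2_eq_square algebra_simps)
  ultimately have "(4 * D + 1)\<^sup>2 \<le> 25 * D\<^sup>2" "8 * D\<^sup>2 \<le> (4 * D + 1)\<^sup>2"
    using assms by linarith+
  then have lower: "1 / 200 \<le> D\<^sup>2 / (8 * (4 * D + 1)\<^sup>2)"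
    and upper: "D\<^sup>2 / (8 * (4 * D + 1)\<^sup>2) \<le> 1 / 64"
    using assms by (simp_all add: field_simps)
  have nonneg: "D * \<epsilon>\<^sup>2 / M\<^sup>2 \<ge> 0" using assms by simp
  have scale: "D * \<epsilon>\<^sup>2 / (64 * M\<^sup>2) = D * \<epsilon>\<^sup>2 / M\<^sup>2 * (1 / 64)"
    "D * \<epsilon>\<^sup>2 / (200 * M\<^sup>2) = D * \<epsilon>\<^sup>2 / M\<^sup>2 * (1 / 200)"
    by simp_all
  have "D ^ 3 * \<epsilon>\<^sup>2 / (8 * (4 * D + 1)\<^sup>2 * M\<^sup>2) \<le> D * \<epsilon>\<^sup>2 / (64 * M\<^sup>2)"
    unfolding ratio scale by (rule mult_left_mono[OF upper nonneg])
  then show "exp (- (D * \<epsilon>\<^sup>2) / (64 * M\<^sup>2)) \<le> exp (- (D ^ 3 * \<epsilon>\<^sup>2) / (8 * (4 * D + 1)\<^sup>2 * M\<^sup>2))"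
    by simp
  have "D * \<epsilon>\<^sup>2 / (200 * M\<^sup>2) \<le> D ^ 3 * \<epsilon>\<^sup>2 / (8 * (4 * D + 1)\<^sup>2 * M\<^sup>2)"
    unfolding ratio scale by (rule mult_left_mono[OF lower nonneg])
  then show "exp (- (D ^ 3 * \<epsilon>\<^sup>2) / (8 * (4 * D + 1)\<^sup>2 * M\<^sup>2)) \<le> exp (- (D * \<epsilon>\<^sup>2) / (200 * M\<^sup>2))"
    by simp
qed

theorem proposition7:
  fixes X :: "(real^'d) set"
    and k :: "real^'d \<Rightarrow> real"
    and P :: "(real^'d) measure"
    and \<mu> :: "((real^'d) \<times> (real^'d)) measure"
    and D :: nat
    and \<epsilon> :: real
  assumes k_cont: "continuous_on UNIV k"
    and k_pd: "positive_definite_fun k"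
    and k0: "k 0 = 1"
    and P_prob: "prob_space P"
    and P_sets: "sets P = sets borel"
    and bochner: "\<And>\<Delta>. complex_of_real (k \<Delta>) = (\<integral>\<omega>. exp (\<i> * complex_of_real (\<omega> \<bullet> \<Delta>)) \<partial>P)"
    and mu_sf: "sigma_finite_measure \<mu>"
    and mu_sets: "sets \<mu> = sets (restrict_space borel (X \<times> X))"
    and D_even: "even D"
    and D_pos: "D > 0"
    and eps_pos: "\<epsilon> > 0"
  shows "let \<Omega> = PiM {..<D div 2} (\<lambda>_. P);
             F = (\<lambda>\<omega>. sqnorm_mu \<mu> (rff_err D k \<omega>));
             E = (\<integral>\<omega>. F \<omega> \<partial>\<Omega>);
             M = measure \<mu> (X \<times> X)
         in measure \<Omega> {\<omega> \<in> space \<Omega>. \<bar>F \<omega> - E\<bar> \<ge> \<epsilon>}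
              \<le> 2 * exp (- (real D ^ 3 * \<epsilon>\<^sup>2) / (8 * (4 * real D + 1)\<^sup>2 * M\<^sup>2))
          \<and> 2 * exp (- (real D ^ 3 * \<epsilon>\<^sup>2) / (8 * (4 * real D + 1)\<^sup>2 * M\<^sup>2))
              \<le> 2 * exp (- (real D * \<epsilon>\<^sup>2) / (200 * M\<^sup>2))"
proof -
  let ?\<Omega> = "PiM {..<D div 2} (\<lambda>_. P)" and ?F = "\<lambda>\<omega>. sqnorm_mu \<mu> (rff_err D k \<omega>)"
  define M where "M = measure \<mu> (X \<times> X)"
  have space_\<mu>: "space \<mu> = X \<times> X"
    using sets_eq_imp_space_eq[OF mu_sets] by (simp add: space_restrict_space)
  have k_bound: "\<bar>k d\<bar> \<le> 1" for d
    using norm_integral_exp_i_le_1[OF P_prob] bochner[of d] by (metis norm_of_real)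
  have tail: "measure ?\<Omega> {\<omega> \<in> space ?\<Omega>. \<bar>?F \<omega> - (\<integral>\<omega>. ?F \<omega> \<partial>?\<Omega>)\<bar> \<ge> \<epsilon>}
      \<le> 2 * exp (- (real D * \<epsilon>\<^sup>2) / (64 * M\<^sup>2))"
  proof (cases "emeasure \<mu> (space \<mu>) = \<infinity>")
    case True
    \<comment> \<open>\<open>measure\<close> is 0 on sets of infinite measure, so the bound degenerates to 2.\<close>
    then have "M = 0" by (simp add: M_def measure_def space_\<mu>)
    moreover have "measure ?\<Omega> A \<le> 2" for A
      by (rule order_trans[OF prob_space.prob_le_1]) (simp_all add: prob_space_PiM P_prob)
    ultimately show ?thesis by simp
  next
    case False
    then show ?thesis
      using sqnorm_rff_err_concentration[OF P_prob P_sets k_cont k_bound finite_measureI mu_sets D_even eps_pos]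
      by (simp add: M_def space_\<mu>)
  qed
  have "real D \<ge> 1" using D_pos by simp
  with tail rff_tail_exponent_bounds[of "real D" \<epsilon> M] show ?thesis
    unfolding Let_def M_def[symmetric] by linarith
qed

end
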